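(* Let $n>2$ and $0<\epsilon<\frac{1}{n(n+1)}$. For $1\le i\le n-1$, let player $i$ have the uniform probability measure on the interval $(\frac in-\epsilon,\frac in+\epsilon)$ as valuation, and let player $n$ have the uniform (Lebesgue) valuation on $[0,1]$. Then: (a) in every envy-free complete connected division, all cut points lie in $\{\frac in: 1\le i\le n-1\}$ (each piece is of the form $(\frac{j-1}{n},\frac jn)$), player $n$ has utility exactly $\frac1n$, and each player $i\le n-1$ has utility exactly $\frac12$; (b) the partial division giving player $n$ the interval $(0,\frac1n)$, player 1 the interval $(\frac1n,\frac2n-2\epsilon)$, and each player $2\le i\le n-1$ the interval $\big(i(\frac1n-\epsilon),(i+1)(\frac1n-\epsilon)\big)$, and discarding the rest, is envy-free, gives player $n$ utility $\frac1n$, player 1 utility $\frac12$, and each player $2\le i\le n-1$ utility $1$.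
   Context: A (connected) division for players $1,\dots,n$ of the cake $[0,1]$ is a sequence $(X_1,\dots,X_n)$ of pairwise disjoint open intervals (possibly empty), $X_i$ being player $i$'s piece; it is complete if the union of the closures of the $X_i$ equals $[0,1]$, and partial otherwise. Each player $i$ has a valuation $v_i$, a nonatomic probability measure on $[0,1]$; $u_i(x,j)=v_i(X_j)$. A division is envy-free if $u_i(x,i)\ge u_i(x,j)$ for all $i,j$. *)

theory Defs
  imports "HOL-Analysis.Analysis"
begin

definition is_division :: "nat \<Rightarrow> (nat \<Rightarrow> real set) \<Rightarrow> bool" where
  "is_division n X \<longleftrightarrow>
     (\<forall>i\<in>{1..n}. (\<exists>a b. X i = {a<..<b}) \<and> X i \<subseteq> {0..1}) \<and>
     (\<forall>i\<in>{1..n}. \<forall>j\<in>{1..n}. i \<noteq> j \<longrightarrow> X i \<inter> X j = {})"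

definition is_complete :: "nat \<Rightarrow> (nat \<Rightarrow> real set) \<Rightarrow> bool" where
  "is_complete n X \<longleftrightarrow> (\<Union>i\<in>{1..n}. closure (X i)) = {0..1}"

definition valuation :: "nat \<Rightarrow> real \<Rightarrow> nat \<Rightarrow> real measure" where
  "valuation n eps i = uniform_measure lborel
     (if i = n then {0..1} else {real i / real n - eps <..< real i / real n + eps})"

definition util :: "nat \<Rightarrow> real \<Rightarrow> nat \<Rightarrow> real set \<Rightarrow> real" where
  "util n eps i S = measure (valuation n eps i) S"

definition envy_free :: "nat \<Rightarrow> real \<Rightarrow> (nat \<Rightarrow> real set) \<Rightarrow> bool" where
  "envy_free n eps X \<longleftrightarrow>
     (\<forall>i\<in>{1..n}. \<forall>j\<in>{1..n}. util n eps i (X i) \<ge> util n eps i (X j))"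

definition example_division :: "nat \<Rightarrow> real \<Rightarrow> nat \<Rightarrow> real set" where
  "example_division n eps i =
     (if i = n then {0<..<1 / real n}
      else if i = 1 then {1 / real n <..< 2 / real n - 2 * eps}
      else {real i * (1 / real n - eps) <..< real (i + 1) * (1 / real n - eps)})"

end

theory Submission
  imports Defs
begin

(* Write h = 1/n.  Player n values a piece by its length, player i < n by
   the fraction of the window (i h - eps, i h + eps) it covers.
   (a) Player n envies nobody, so no piece is longer than X n.  If X n were longer than h,
   it would strictly contain a grid point k h (1 <= k < n) and, being longer than the
   window, would cover strictly more of player k's window than any piece disjoint from it,
   so player k would envy player n.  Hence all pieces have length <= h; completeness forces
   total length >= 1, so every piece has length exactly h.  Disjoint intervals of length h
   inside [0,1], n of them, must be the grid intervals ((j-1)h, jh).  Finally the grid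
   point i h lies in the closure of some grid piece, worth 1/2 to player i, so player i
   holds a piece adjacent to i h, i.e. worth exactly 1/2.
   (b) The pieces of the example division lie left to right, end before 1, and the
   utilities are explicit window overlaps. *)

subsection \<open>Lengths and overlaps of open intervals\<close>

definition overlap :: "real \<Rightarrow> real \<Rightarrow> real \<Rightarrow> real \<Rightarrow> real" where
  "overlap a b c d = max 0 (min b d - max a c)"

lemma measure_Ioo: "measure lborel {a<..<(b::real)} = max 0 (b - a)"
  by (cases "a \<le> b") auto

lemma disjoint_Ioo_cases:
  assumes "{a<..<(b::real)} \<inter> {c<..<d} = {}"
  shows "b \<le> a \<or> d \<le> c \<or> b \<le> c \<or> d \<le> a"
proof -
  have "{max a c<..<min b d} = {}" using assms by (metis Int_greaterThanLessThan)
  then have "min b d \<le> max a c" by simp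
  then show ?thesis by (auto simp: min_def max_def split: if_splits)
qed

lemma covering_length_ge_1:
  assumes "finite I" "(\<Union>i\<in>I. closure (X i)) = {0..1::real}"
    and "\<forall>i\<in>I. X i = {a i<..<b i}"
  shows "(\<Sum>i\<in>I. measure lborel (X i)) \<ge> 1"
proof -
  have "1 = measure lborel (\<Union>i\<in>I. closure (X i))" using assms(2) by simp
  also have "\<dots> \<le> (\<Sum>i\<in>I. measure lborel (closure (X i)))"
    by (rule measure_UNION_le) (use assms(1) in auto)
  also have "\<dots> = (\<Sum>i\<in>I. measure lborel (X i))"
  proof (rule sum.cong)
    fix i assume "i \<in> I"
    then show "measure lborel (closure (X i)) = measure lborel (X i)"
      using assms(3) by (cases "a i < b i") auto
  qed simp
  finally show ?thesis .
qed

lemma packing_length_le: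
  assumes "finite S" "\<forall>j\<in>S. X j = {a j<..<b j} \<and> X j \<subseteq> {u..v::real}"
    and "\<forall>i\<in>S. \<forall>j\<in>S. i \<noteq> j \<longrightarrow> X i \<inter> X j = {}" "u \<le> v"
  shows "(\<Sum>j\<in>S. measure lborel (X j)) \<le> v - u"
proof -
  have "(\<Sum>j\<in>S. measure lborel (X j)) = measure lborel (\<Union>j\<in>S. X j)"
  proof (rule measure_finite_Union[symmetric])
    show "disjoint_family_on X S" using assms(3) by (auto simp: disjoint_family_on_def)
    fix j assume "j \<in> S"
    then show "emeasure lborel (X j) \<noteq> \<infinity>" using assms(2) by (cases "a j \<le> b j") auto
  qed (use assms in auto)
  also have "\<dots> \<le> measure lborel {u..v}"
    by (rule measure_mono_fmeasurable) (use assms in \<open>auto simp: fmeasurable_def\<close>)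
  finally show ?thesis using assms(4) by simp
qed

text \<open>An interval longer than a window of width 2 eps and containing its centre m covers
  strictly more of the window than any interval disjoint from it: it covers one half of
  the window and more of the other, while a disjoint interval misses the centre and
  everything on one side of it.\<close>
lemma straddling_interval_wins:
  fixes a b c d m eps :: real
  assumes "eps > 0" "2 * eps < d - c" "c < m" "m < d"
    and "b \<le> a \<or> d \<le> a \<or> b \<le> c"
  shows "overlap a b (m - eps) (m + eps) < overlap c d (m - eps) (m + eps)"
  using assms by (auto simp: overlap_def max_def min_def)

lemma overlap_grid_window:
  fixes i j :: nat and eps h :: real
  assumes "eps > 0" "2 * eps < h"
  shows "overlap ((real j - 1) * h) (real j * h) (real i * h - eps) (real i * h + eps)
     = (if j = i \<or> j = i + 1 then eps else 0)"
proof -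
  consider "j + 1 \<le> i" | "j = i" | "j = i + 1" | "i + 2 \<le> j" by linarith
  then show ?thesis
  proof cases
    case 1
    then have "(real j + 1) * h \<le> real i * h" using assms by (intro mult_right_mono) auto
    then show ?thesis using 1 assms by (auto simp: overlap_def max_def min_def algebra_simps)
  next
    case 4
    then have "(real i + 2) * h \<le> real j * h" using assms by (intro mult_right_mono) auto
    then show ?thesis using 4 assms by (auto simp: overlap_def max_def min_def algebra_simps)
  qed (use assms in \<open>auto simp: overlap_def max_def min_def algebra_simps\<close>)
qed

lemma grid_point_inside:
  assumes "n > 0" "0 \<le> c" "d \<le> 1" "d - c > 1 / real n"
  shows "\<exists>k\<in>{1..<n}. c < real k / real n \<and> real k / real n < d"
proof -
  define k where "k = nat \<lfloor>c * real n\<rfloor> + 1"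
  have "real k = of_int \<lfloor>c * real n\<rfloor> + 1" using assms(2) by (simp add: k_def)
  then have "c * real n < real k" "real k \<le> c * real n + 1" by linarith+
  then have above: "c < real k / real n" and below: "real k / real n \<le> c + 1 / real n"
    using assms(1) by (simp_all add: field_simps)
  then have below_d: "real k / real n < d" using assms(4) by linarith
  then have "real k / real n < 1" using assms(3) by linarith
  then have "k < n" using assms(1) by (simp add: divide_less_eq)
  moreover have "1 \<le> k" by (simp add: k_def)
  ultimately show ?thesis using above below_d by auto
qed

text \<open>The intervals left of a given one fill [0, a], those right
  of it fill [a + h, 1]; counting lengths pins a down to a multiple of h.\<close>
lemma equal_intervals_form_grid:
  assumes "finite I" "h > 0" "real (card I) * h = 1"
    and pieces: "\<forall>i\<in>I. X i = {a i<..<a i + h} \<and> X i \<subseteq> {0..1}"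
    and disj: "\<forall>i\<in>I. \<forall>j\<in>I. i \<noteq> j \<longrightarrow> X i \<inter> X j = {}"
    and k: "k \<in> I"
  shows "\<exists>j\<in>{1..card I}. a k = (real j - 1) * h"
proof -
  have inside: "0 \<le> a i \<and> a i + h \<le> 1" if "i \<in> I" for i
    using pieces that assms(2) by (auto simp: greaterThanLessThan_subseteq_atLeastAtMost_iff)
  have length: "measure lborel (X i) = h" if "i \<in> I" for i
    using pieces that assms(2) by (simp add: measure_Ioo)
  define L where "L = {j\<in>I. a j + h \<le> a k}"
  define R where "R = {j\<in>I. a k + h \<le> a j}"
  have "L \<union> R = I - {k}"
  proof
    show "L \<union> R \<subseteq> I - {k}" using k assms(2) by (auto simp: L_def R_def)
    show "I - {k} \<subseteq> L \<union> R"
    proof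
      fix j assume j: "j \<in> I - {k}"
      then have "{a j<..<a j + h} \<inter> {a k<..<a k + h} = {}" using disj pieces k by auto
      then show "j \<in> L \<union> R"
        using disjoint_Ioo_cases j assms(2) by (fastforce simp: L_def R_def)
    qed
  qed
  moreover have "L \<inter> R = {}" using assms(2) by (auto simp: L_def R_def)
  moreover have "finite L" "finite R" using assms(1) by (auto simp: L_def R_def)
  ultimately have card: "card L + card R = card I - 1"
    using k assms(1) by (metis card_Diff_singleton card_Un_disjoint)
  have "\<forall>j\<in>L. X j = {a j<..<a j + h} \<and> X j \<subseteq> {0..a k}"
  proof
    fix j assume "j \<in> L"
    then have "j \<in> I" "a j + h \<le> a k" by (auto simp: L_def)
    then show "X j = {a j<..<a j + h} \<and> X j \<subseteq> {0..a k}" using pieces inside[of j] by auto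
  qed
  moreover have "\<forall>i\<in>L. \<forall>j\<in>L. i \<noteq> j \<longrightarrow> X i \<inter> X j = {}"
    using disj by (auto simp: L_def)
  ultimately have "(\<Sum>j\<in>L. measure lborel (X j)) \<le> a k - 0"
    using packing_length_le[of L X a "\<lambda>j. a j + h" 0 "a k"] assms(1) inside k
    by (auto simp: L_def)
  then have left: "real (card L) * h \<le> a k" using length by (simp add: L_def)
  have "\<forall>j\<in>R. X j = {a j<..<a j + h} \<and> X j \<subseteq> {a k + h..1}"
  proof
    fix j assume "j \<in> R"
    then have "j \<in> I" "a k + h \<le> a j" by (auto simp: R_def)
    then show "X j = {a j<..<a j + h} \<and> X j \<subseteq> {a k + h..1}" using pieces inside[of j] by auto
  qed
  moreover have "\<forall>i\<in>R. \<forall>j\<in>R. i \<noteq> j \<longrightarrow> X i \<inter> X j = {}"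
    using disj by (auto simp: R_def)
  ultimately have "(\<Sum>j\<in>R. measure lborel (X j)) \<le> 1 - (a k + h)"
    using packing_length_le[of R X a "\<lambda>j. a j + h" "a k + h" 1] assms(1) inside k
    by (auto simp: R_def)
  then have right: "real (card R) * h \<le> 1 - (a k + h)" using length by (simp add: R_def)
  have "card I \<ge> 1" using k assms(1) by (metis card_0_eq empty_iff less_one not_less)
  then have "card I = card L + card R + 1" using card by simp
  then have "(real (card L) + real (card R) + 1) * h = 1" using assms(3) by (simp add: add.commute)
  then have "real (card L) * h + real (card R) * h = 1 - h" by (simp add: algebra_simps)
  then have "a k = (real (card L + 1) - 1) * h" using left right by simp
  moreover have "card L + 1 \<in> {1..card I}" using card \<open>card I \<ge> 1\<close> by auto
  ultimately show ?thesis by blast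
qed

subsection \<open>The two kinds of valuations\<close>

lemma util_window:
  assumes "i \<noteq> n" "eps > 0"
  shows "util n eps i {a<..<b}
           = overlap a b (real i / real n - eps) (real i / real n + eps) / (2 * eps)"
proof -
  let ?W = "{real i / real n - eps<..<real i / real n + eps}"
  have "emeasure lborel ?W = ennreal (2 * eps)" using assms(2) by simp
  then have "emeasure lborel ?W \<noteq> 0" "emeasure lborel ?W \<noteq> \<infinity>" using assms(2) by auto
  then show ?thesis using assms
    by (simp add: util_def valuation_def measure_uniform_measure measure_Ioo overlap_def)
qed

lemma util_window_le_1:
  assumes "i \<noteq> n" "eps > 0"
  shows "util n eps i {a<..<b} \<le> 1"
  using assms by (auto simp: util_window overlap_def max_def min_def divide_le_eq)

lemma util_last:
  assumes "S \<subseteq> {0..1}" "S \<in> sets lborel"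
  shows "util n eps n S = measure lborel S"
proof -
  have "emeasure lborel {0..1::real} \<noteq> 0" "emeasure lborel {0..1::real} \<noteq> \<infinity>" by auto
  then show ?thesis using assms
    by (simp add: util_def valuation_def measure_uniform_measure Int_absorb1 inf.absorb2)
qed

lemma util_grid_interval:
  assumes "i \<noteq> n" "eps > 0" "2 * eps < 1 / real n"
  shows "util n eps i {(real j - 1) / real n<..<real j / real n}
           = (if j = i \<or> j = i + 1 then 1 / 2 else 0)"
  using overlap_grid_window[OF assms(2,3), of j i] assms(2)
  by (simp add: util_window[OF assms(1,2)])

lemma eps_small:
  assumes "n > 0" "eps < 1 / (real n * (real n + 1))"
  shows "(real n + 1) * eps < 1 / real n"
proof -
  have "0 < real n * (real n + 1)" using assms(1) by simp
  then have "eps * (real n * (real n + 1)) < 1" using assms(2) by (simp add: less_divide_eq)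
  then show ?thesis using assms(1) by (simp add: field_simps)
qed

subsection \<open>Part (a): envy-free complete divisions\<close>

lemma division_endpoints:
  assumes "is_division n X"
  obtains a b where "\<forall>i\<in>{1..n}. X i = {a i<..<b i}"
proof -
  have "\<forall>i\<in>{1..n}. \<exists>p. X i = {fst p<..<snd p}"
    using assms unfolding is_division_def by (metis fst_conv snd_conv)
  then obtain p where "\<forall>i\<in>{1..n}. X i = {fst (p i)<..<snd (p i)}" by metis
  then show ?thesis by (rule that[of "\<lambda>i. fst (p i)" "\<lambda>i. snd (p i)"])
qed

lemma division_length_util_last:
  assumes "is_division n X" "i \<in> {1..n}"
  shows "util n eps n (X i) = measure lborel (X i)"
proof -
  have "(\<exists>a b. X i = {a<..<b}) \<and> X i \<subseteq> {0..1}"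
    using assms unfolding is_division_def by blast
  then show ?thesis by (intro util_last) auto
qed

text \<open>No piece is longer than player n's own piece, which is at most 1/n long: otherwise
  the player whose window centre lies inside X n would envy player n.\<close>
lemma envy_free_pieces_short:
  assumes "n > 0" "eps > 0" "2 * eps < 1 / real n"
    and div: "is_division n X" and ef: "envy_free n eps X" and i: "i \<in> {1..n}"
  shows "measure lborel (X i) \<le> 1 / real n"
proof -
  obtain a b where ab: "\<forall>i\<in>{1..n}. X i = {a i<..<b i}" using division_endpoints[OF div] .
  have n: "n \<in> {1..n}" using assms(1) by simp
  have "measure lborel (X i) \<le> measure lborel (X n)"
    using ef i n division_length_util_last[OF div] unfolding envy_free_def by metis
  moreover have "measure lborel (X n) \<le> 1 / real n"
  proof (rule ccontr)
    assume "\<not> ?thesis"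
    then have long: "b n - a n > 1 / real n" using ab n by (simp add: measure_Ioo)
    then have "a n < b n" using assms(1) by (smt (verit) divide_pos_pos of_nat_0_less_iff)
    then have "0 \<le> a n" "b n \<le> 1" using div ab n
      by (auto simp: is_division_def greaterThanLessThan_subseteq_atLeastAtMost_iff)
    then obtain k where k: "k \<in> {1..<n}" "a n < real k / real n" "real k / real n < b n"
      using grid_point_inside[OF assms(1) _ _ long] by blast
    then have kn: "k \<in> {1..n}" "k \<noteq> n" by auto
    have "{a k<..<b k} \<inter> {a n<..<b n} = {}" using div ab kn n unfolding is_division_def by metis
    then have "b k \<le> a k \<or> b n \<le> a k \<or> b k \<le> a n"
      using disjoint_Ioo_cases k by fastforce
    then have "overlap (a k) (b k) (real k / real n - eps) (real k / real n + eps)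
             < overlap (a n) (b n) (real k / real n - eps) (real k / real n + eps)"
      using assms(2,3) long k by (intro straddling_interval_wins) auto
    then have "util n eps k (X k) < util n eps k (X n)"
      using assms(2) ab kn n by (simp add: util_window divide_strict_right_mono)
    then show False using ef kn n unfolding envy_free_def by fastforce
  qed
  ultimately show ?thesis by linarith
qed

text \<open>Since the pieces cover the cake, the bound 1/n is attained by every piece.\<close>
lemma envy_free_pieces_equal:
  assumes "n > 0" "eps > 0" "2 * eps < 1 / real n"
    and div: "is_division n X" and comp: "is_complete n X" and ef: "envy_free n eps X"
    and i: "i \<in> {1..n}"
  shows "measure lborel (X i) = 1 / real n"
proof (rule ccontr)
  assume "\<not> ?thesis"
  then have "measure lborel (X i) < 1 / real n"
    using envy_free_pieces_short[OF assms(1-3) div ef i] by simp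
  then have "(\<Sum>j\<in>{1..n}. measure lborel (X j)) < (\<Sum>j\<in>{1..n}. 1 / real n)"
    using envy_free_pieces_short[OF assms(1-3) div ef] i
    by (intro sum_strict_mono_ex1) auto
  moreover obtain a b where "\<forall>i\<in>{1..n}. X i = {a i<..<b i}"
    using division_endpoints[OF div] .
  then have "(\<Sum>j\<in>{1..n}. measure lborel (X j)) \<ge> 1"
    using comp by (intro covering_length_ge_1) (auto simp: is_complete_def)
  ultimately show False using assms(1) by simp
qed

text \<open>Pieces of length exactly 1/n tile the cake, hence are the grid intervals.\<close>
lemma envy_free_complete_grid:
  assumes "n > 0" "eps > 0" "2 * eps < 1 / real n"
    and div: "is_division n X" and comp: "is_complete n X" and ef: "envy_free n eps X"
    and i: "i \<in> {1..n}"
  shows "\<exists>j\<in>{1..n}. X i = {(real j - 1) / real n<..<real j / real n}"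
proof -
  obtain a b where ab: "\<forall>i\<in>{1..n}. X i = {a i<..<b i}" using division_endpoints[OF div] .
  have "b j = a j + 1 / real n" if "j \<in> {1..n}" for j
    using envy_free_pieces_equal[OF assms(1-6) that] ab that assms(1)
    by (auto simp: measure_Ioo max_def split: if_splits)
  then have pieces: "\<forall>j\<in>{1..n}. X j = {a j<..<a j + 1 / real n} \<and> X j \<subseteq> {0..1}"
    using ab div by (auto simp: is_division_def)
  obtain j where j: "j \<in> {1..n}" "a i = (real j - 1) * (1 / real n)"
    using equal_intervals_form_grid[OF _ _ _ pieces _ i] div assms(1)
    by (auto simp: is_division_def)
  then have "a i + 1 / real n = real j / real n" using assms(1) by (simp add: field_simps)
  then have "X i = {(real j - 1) / real n<..<real j / real n}" using pieces i j(2) by simp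
  then show ?thesis using j(1) by blast
qed

text \<open>Player i < n gets exactly 1/2: the grid point i/n lies in the closure of some
  piece, which is a grid interval adjacent to i/n and thus worth 1/2 to player i; her own
  piece, a grid interval worth at least that, is then also adjacent to i/n.\<close>
lemma envy_free_complete_util:
  assumes "n > 0" "eps > 0" "2 * eps < 1 / real n"
    and div: "is_division n X" and comp: "is_complete n X" and ef: "envy_free n eps X"
    and i: "i \<in> {1..n-1}"
  shows "util n eps i (X i) = 1 / 2"
proof -
  have i': "i \<in> {1..n}" "i \<noteq> n" using i by auto
  note grid = envy_free_complete_grid[OF assms(1-6)]
  note util_grid = util_grid_interval[OF i'(2) assms(2,3)]
  have "real i / real n \<in> {0..1}" using i' by (simp add: divide_le_eq)
  then obtain k where k: "k \<in> {1..n}" "real i / real n \<in> closure (X k)"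
    using comp unfolding is_complete_def by blast
  obtain j where j: "X k = {(real j - 1) / real n<..<real j / real n}" using grid k(1) by blast
  then have "(real j - 1) / real n \<le> real i / real n" "real i / real n \<le> real j / real n"
    using k(2) assms(1) by (auto simp: divide_strict_right_mono)
  then have "j = i \<or> j = i + 1" using assms(1) by (simp add: divide_le_cancel) linarith
  then have "util n eps i (X k) = 1 / 2" using j util_grid by simp
  moreover have "util n eps i (X k) \<le> util n eps i (X i)"
    using ef i'(1) k(1) unfolding envy_free_def by blast
  moreover obtain j' where "X i = {(real j' - 1) / real n<..<real j' / real n}"
    using grid i'(1) by blast
  ultimately show ?thesis using util_grid[of j'] by (auto split: if_splits)
qed

subsection \<open>Part (b): the partial example division\<close>

text \<open>With h = 1/n and q = h - eps the example pieces lie left to right: player n gets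
  (0, h), player 1 gets (h, 2q) and player i >= 2 gets (iq, (i+1)q).\<close>
definition example_start :: "nat \<Rightarrow> real \<Rightarrow> nat \<Rightarrow> real" where
  "example_start n eps i =
     (if i = n then 0 else if i = 1 then 1 / real n else real i * (1 / real n - eps))"

definition example_end :: "nat \<Rightarrow> real \<Rightarrow> nat \<Rightarrow> real" where
  "example_end n eps i = (if i = n then 1 / real n else (real i + 1) * (1 / real n - eps))"

lemma example_division_eq:
  "example_division n eps i = {example_start n eps i<..<example_end n eps i}"
  by (simp add: example_division_def example_start_def example_end_def algebra_simps)

text \<open>The room left by eps inside a grid cell: the window of player i < n fits into the
  piece (iq, (i+1)q).\<close>
lemma eps_margin:
  assumes "eps > 0" "(real n + 1) * eps < 1 / real n" "i < n"
  shows "(real i + 2) * eps < 1 / real n"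
proof -
  have "(real i + 2) * eps \<le> (real n + 1) * eps" using assms by (intro mult_right_mono) auto
  then show ?thesis using assms(2) by linarith
qed

lemma example_piece_bounds:
  assumes "n > 2" "eps > 0" "(real n + 1) * eps < 1 / real n" and i: "i \<in> {1..<n}"
  shows "1 / real n \<le> example_start n eps i"
    and "real i * (1 / real n - eps) \<le> example_start n eps i"
    and "example_start n eps i < example_end n eps i"
    and "example_end n eps i = (real i + 1) * (1 / real n - eps)"
    and "example_end n eps i < 1"
proof -
  define q where "q = 1 / real n - eps"
  have three: "3 * eps < 1 / real n" using eps_margin[OF assms(2,3), of 1] assms(1) by simp
  then have q: "q > 0" "1 / real n \<le> 2 * q" using assms(2) unfolding q_def by (smt (verit))+
  show "1 / real n \<le> example_start n eps i"
  proof (cases "i = 1")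
    case False
    then have "2 * q \<le> real i * q" using i q by (intro mult_right_mono) auto
    then show ?thesis using q False i by (simp add: example_start_def q_def)
  qed (use i in \<open>simp add: example_start_def\<close>)
  show "real i * (1 / real n - eps) \<le> example_start n eps i"
    using i assms(2) by (auto simp: example_start_def)
  show "example_start n eps i < example_end n eps i"
  proof (cases "i = 1")
    case True
    have "1 / real n < 2 * q" using three assms(2) unfolding q_def by (smt (verit))
    then show ?thesis using True i by (simp add: example_start_def example_end_def q_def)
  next
    case False
    have "real i * q < (real i + 1) * q" using q by (simp add: algebra_simps)
    then show ?thesis using False i by (simp add: example_start_def example_end_def q_def)
  qed
  show end_eq: "example_end n eps i = (real i + 1) * (1 / real n - eps)"
    using i by (simp add: example_end_def)
  have "(real i + 1) * q \<le> real n * q" using i q by (intro mult_right_mono) auto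
  also have "\<dots> < 1" using assms(1,2) by (simp add: q_def algebra_simps)
  finally show "example_end n eps i < 1" using end_eq by (simp add: q_def)
qed

lemma example_last_piece: "example_start n eps n = 0" "example_end n eps n = 1 / real n"
  by (simp_all add: example_start_def example_end_def)

lemma example_pieces_ordered:
  assumes "n > 2" "eps > 0" "(real n + 1) * eps < 1 / real n"
    and "j \<in> {1..<n}" "i = n \<or> (1 \<le> i \<and> i < j)"
  shows "example_end n eps i \<le> example_start n eps j"
  using assms(5)
proof
  assume "1 \<le> i \<and> i < j"
  moreover have "0 \<le> 1 / real n - eps" using eps_margin[OF assms(2,3), of 1] assms by simp
  ultimately have "(real i + 1) * (1 / real n - eps) \<le> real j * (1 / real n - eps)"
    by (intro mult_right_mono) auto
  moreover have "example_end n eps i = (real i + 1) * (1 / real n - eps)"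
    using example_piece_bounds(4)[OF assms(1-3), of i] \<open>1 \<le> i \<and> i < j\<close> assms(4) by simp
  moreover have "real j * (1 / real n - eps) \<le> example_start n eps j"
    using example_piece_bounds(2)[OF assms(1-3,4)] .
  ultimately show ?thesis by linarith
qed (use example_piece_bounds(1)[OF assms(1-4)] example_last_piece in simp)

lemma example_is_division:
  assumes "n > 2" "eps > 0" "(real n + 1) * eps < 1 / real n"
  shows "is_division n (example_division n eps)"
  unfolding is_division_def
proof (intro conjI ballI impI)
  fix i assume i: "i \<in> {1..n}"
  show "\<exists>a b. example_division n eps i = {a<..<b}" by (auto simp: example_division_eq)
  have "0 \<le> example_start n eps i \<and> example_end n eps i \<le> 1"
  proof (cases "i = n")
    case False
    then have "1 / real n \<le> example_start n eps i" "example_end n eps i < 1"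
      using example_piece_bounds(1,5)[OF assms, of i] i by auto
    moreover have "0 \<le> 1 / real n" by simp
    ultimately show ?thesis by linarith
  qed (use assms(1) in \<open>simp add: example_last_piece\<close>)
  then show "example_division n eps i \<subseteq> {0..1}" by (auto simp: example_division_eq)
next
  fix i j assume "i \<in> {1..n}" "j \<in> {1..n}" "i \<noteq> j"
  then consider "j \<in> {1..<n}" "i = n \<or> (1 \<le> i \<and> i < j)"
    | "i \<in> {1..<n}" "j = n \<or> (1 \<le> j \<and> j < i)" by fastforce
  then have "example_end n eps i \<le> example_start n eps j
           \<or> example_end n eps j \<le> example_start n eps i"
    by cases (use example_pieces_ordered[OF assms] in blast)+
  then show "example_division n eps i \<inter> example_division n eps j = {}"
    by (auto simp: example_division_eq)
qed

text \<open>All pieces end before 1, so the point 1 is not covered.\<close>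
lemma example_not_complete:
  assumes "n > 2" "eps > 0" "(real n + 1) * eps < 1 / real n"
  shows "\<not> is_complete n (example_division n eps)"
proof
  assume "is_complete n (example_division n eps)"
  then obtain i where i: "i \<in> {1..n}" "(1::real) \<in> closure (example_division n eps i)"
    unfolding is_complete_def by (metis UN_E atLeastAtMost_iff order_refl zero_le_one)
  have "closure (example_division n eps i) \<subseteq> {..example_end n eps i}"
    unfolding example_division_eq by (rule closure_minimal) auto
  moreover have "example_end n eps i < 1"
    using example_piece_bounds(5)[OF assms, of i] example_last_piece i assms(1)
    by (cases "i = n") auto
  ultimately show False using i(2) by auto
qed

lemma example_util_last:
  assumes "n > 2" "eps > 0" "(real n + 1) * eps < 1 / real n" "j \<in> {1..n}"
  shows "util n eps n (example_division n eps j) \<le> 1 / real n"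
    and "util n eps n (example_division n eps n) = 1 / real n"
proof -
  have len: "util n eps n (example_division n eps k)
              = max 0 (example_end n eps k - example_start n eps k)" if "k \<in> {1..n}" for k
    using division_length_util_last[OF example_is_division[OF assms(1-3)] that]
    by (simp add: example_division_eq measure_Ioo)
  show "util n eps n (example_division n eps n) = 1 / real n"
    using len[of n] assms(1) by (simp add: example_last_piece)
  have "example_end n eps j - example_start n eps j \<le> 1 / real n"
  proof (cases "j = n")
    case False
    define q where "q = 1 / real n - eps"
    have "example_end n eps j - example_start n eps j \<le> (real j + 1) * q - real j * q"
      using example_piece_bounds(2,4)[OF assms(1-3), of j] False assms(4) by (simp add: q_def)
    also have "\<dots> = q" by (simp add: algebra_simps)
    finally show ?thesis using assms(2) by (simp add: q_def)
  qed (simp add: example_last_piece)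
  then show "util n eps n (example_division n eps j) \<le> 1 / real n"
    using len[OF assms(4)] by simp
qed

text \<open>Player 1 gets half her window, and no piece gives her more: the pieces of players
  n and 1 each cover half of it, the others lie to the right of it.\<close>
lemma example_util_first:
  assumes "n > 2" "eps > 0" "(real n + 1) * eps < 1 / real n" "j \<in> {1..n}"
  shows "util n eps 1 (example_division n eps j) \<le> 1 / 2"
    and "util n eps 1 (example_division n eps 1) = 1 / 2"
proof -
  have three: "3 * eps < 1 / real n" using eps_margin[OF assms(2,3), of 1] assms(1) by simp
  have u: "util n eps 1 (example_division n eps k) = overlap (example_start n eps k)
             (example_end n eps k) (1 / real n - eps) (1 / real n + eps) / (2 * eps)" for k
    using assms(1,2) by (simp add: example_division_eq util_window)
  show "util n eps 1 (example_division n eps 1) = 1 / 2"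
    using u[of 1] three assms(1,2)
    by (simp add: example_start_def example_end_def overlap_def algebra_simps)
  consider "j = n" | "j = 1" | "j \<in> {2..<n}" using assms(4) by fastforce
  then show "util n eps 1 (example_division n eps j) \<le> 1 / 2"
  proof cases
    case 1 then show ?thesis
      using u[of n] three assms(2) by (simp add: example_last_piece overlap_def)
  next
    case 2 then show ?thesis
      using u[of 1] three assms(1,2)
      by (simp add: example_start_def example_end_def overlap_def algebra_simps)
  next
    case 3
    moreover have "0 \<le> 1 / real n - eps" using three assms(2) by linarith
    ultimately have "2 * (1 / real n - eps) \<le> real j * (1 / real n - eps)"
      by (intro mult_right_mono) auto
    then have "1 / real n + eps \<le> example_start n eps j"
      using example_piece_bounds(2)[OF assms(1-3), of j] 3 three by auto
    then show ?thesis using u[of j] assms(2) by (simp add: overlap_def)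
  qed
qed

lemma example_util_middle:
  assumes "n > 2" "eps > 0" "(real n + 1) * eps < 1 / real n" "i \<in> {2..<n}"
  shows "util n eps i (example_division n eps i) = 1"
proof -
  have i: "i \<noteq> n" "i \<noteq> 1" using assms(4) by auto
  have "(real i + 2) * eps < 1 / real n" using eps_margin[OF assms(2,3)] assms(4) by simp
  moreover have "example_end n eps i = real i / real n + 1 / real n - (real i + 1) * eps"
    using i by (simp add: example_end_def algebra_simps add_divide_distrib)
  ultimately have "real i / real n + eps \<le> example_end n eps i"
    by (simp add: algebra_simps)
  moreover have "example_start n eps i \<le> real i / real n - eps"
    using i assms(2,4) by (simp add: example_start_def algebra_simps)
  ultimately show ?thesis
    using assms(2) i by (simp add: example_division_eq util_window overlap_def)
qed

text \<open>Envy-freeness: players n and 1 receive the most any piece is worth to them, and the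
  players 2..n-1 receive their whole window.\<close>
lemma example_envy_free:
  assumes "n > 2" "eps > 0" "(real n + 1) * eps < 1 / real n"
  shows "envy_free n eps (example_division n eps)"
  unfolding envy_free_def
proof (intro ballI)
  fix i j assume i: "i \<in> {1..n}" and j: "j \<in> {1..n}"
  consider "i = n" | "i = 1" | "i \<in> {2..<n}" using i by fastforce
  then show "util n eps i (example_division n eps j) \<le> util n eps i (example_division n eps i)"
  proof cases
    case 3
    then have "util n eps i (example_division n eps j) \<le> 1"
      by (simp add: example_division_eq util_window_le_1 assms(2))
    then show ?thesis using example_util_middle[OF assms 3] by simp
  qed (use example_util_last[OF assms j] example_util_first[OF assms j] in simp_all)
qed

theorem mainTheorem13:
  fixes n :: nat and eps :: real
  assumes "n > 2" and "0 < eps" and "eps < 1 / (real n * (real n + 1))"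
  shows "(\<forall>X. is_division n X \<and> is_complete n X \<and> envy_free n eps X \<longrightarrow>
            (\<forall>i\<in>{1..n}. \<exists>j\<in>{1..n}. X i = {(real j - 1) / real n <..< real j / real n}) \<and>
            util n eps n (X n) = 1 / real n \<and>
            (\<forall>i\<in>{1..n-1}. util n eps i (X i) = 1 / 2))
       \<and> (let D = example_division n eps in
            is_division n D \<and> \<not> is_complete n D \<and> envy_free n eps D \<and>
            util n eps n (D n) = 1 / real n \<and>
            util n eps 1 (D 1) = 1 / 2 \<and>
            (\<forall>i\<in>{2..n-1}. util n eps i (D i) = 1))"
proof -
  have n: "n > 0" "n \<in> {1..n}" using assms(1) by auto
  have small: "(real n + 1) * eps < 1 / real n" using eps_small[OF n(1) assms(3)] .
  have "2 * eps \<le> (real n + 1) * eps" using assms(1,2) by (intro mult_right_mono) auto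
  then have two: "2 * eps < 1 / real n" using small by linarith
  have part_a: "(\<forall>i\<in>{1..n}. \<exists>j\<in>{1..n}. X i = {(real j - 1) / real n <..< real j / real n})
      \<and> util n eps n (X n) = 1 / real n \<and> (\<forall>i\<in>{1..n-1}. util n eps i (X i) = 1 / 2)"
    if "is_division n X" "is_complete n X" "envy_free n eps X" for X
    using envy_free_complete_grid[OF n(1) assms(2) two that]
      envy_free_pieces_equal[OF n(1) assms(2) two that n(2)]
      division_length_util_last[OF that(1) n(2)]
      envy_free_complete_util[OF n(1) assms(2) two that] by simp
  have "{2..n-1} = {2..<n}" using assms(1) by auto
  then have part_b: "\<forall>i\<in>{2..n-1}. util n eps i (example_division n eps i) = 1"
    using example_util_middle[OF assms(1,2) small] by simp
  show ?thesis
    using part_a part_b example_is_division[OF assms(1,2) small]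
      example_not_complete[OF assms(1,2) small] example_envy_free[OF assms(1,2) small]
      example_util_last(2)[OF assms(1,2) small n(2)]
      example_util_first(2)[OF assms(1,2) small n(2)]
    by (simp add: Let_def)
qed

end
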